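(* The transformation $T$ defined as follows is multiply recurrent: $T$ is the rank-one cutting and stacking transformation with $C_0=I=(0,1)$, $r_n=n+2$, $h_n=5^{n(n+1)/2}$ for all $n\ge0$, and spacers chosen so that for each $n$ $$H_n=\{0\}\cup\{j\cdot5^{n(n+1)/2}:1\le j\le\lceil\sqrt n\rceil\}\cup\{5^{n(n+1)/2+i}:\lceil\sqrt n\rceil\le i\le n\}.$$ That is, for every $k\in\mathbb N$ and every measurable $A$ with $\mu(A)>0$ there is $n\in\mathbb N$ with $\mu(A\cap T^nA\cap T^{2n}A\cap\cdots\cap T^{kn}A)>0$.
   Context: Cutting and stacking: $C_0$ is a single level $I$; column $C_n$ of height $h_n$ is cut into $r_n$ equal-width subcolumns, $s_{n,k}\ge0$ spacers are placed above the $k$-th subcolumn, and subcolumns are stacked left to right to form $C_{n+1}$; $T$ maps each level to the one above. With $h_{n,k}=h_n+s_{n,k}$, $H_n=\{0\}\cup\{\sum_{k=0}^{i}h_{n,k}:0\le i<r_n-1\}$; the prescriptions determine $s_{n,k}$ for $k<r_n-1$, and $s_{n,r_n-1}$ is determined by $h_{n+1}=5^{(n+1)(n+2)/2}$. (Thus the first $\lceil\sqrt n\rceil-1$ subcolumns of $C_n$ carry no spacers.) $\mu$ is Lebesgue measure on the resulting space. *)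

theory Defs
  imports "HOL-Analysis.Analysis"
begin

text \<open>Parameters: r n = number of subcolumns of C_n, s n k = number of spacers
placed above the k-th subcolumn of C_n (k < r n).
C_0 is the single level [0,1).  Levels of C_n are intervals of width cs_width r n,
level j of C_n (j < cs_h r s n) being [cs_left r s n j, cs_left r s n j + cs_width r n).
Spacers added at stage n are fresh intervals taken consecutively from [cs_base r s n, ...).\<close>

fun cs_h :: "(nat \<Rightarrow> nat) \<Rightarrow> (nat \<Rightarrow> nat \<Rightarrow> nat) \<Rightarrow> nat \<Rightarrow> nat" where
  "cs_h r s 0 = 1"
| "cs_h r s (Suc n) = (\<Sum>k<r n. cs_h r s n + s n k)"

definition cs_width :: "(nat \<Rightarrow> nat) \<Rightarrow> nat \<Rightarrow> real" where
  "cs_width r n = 1 / real (\<Prod>i<n. r i)"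

text \<open>height in C_(n+1) at which the k-th subcolumn of C_n starts\<close>
definition cs_off :: "(nat \<Rightarrow> nat) \<Rightarrow> (nat \<Rightarrow> nat \<Rightarrow> nat) \<Rightarrow> nat \<Rightarrow> nat \<Rightarrow> nat" where
  "cs_off r s n k = (\<Sum>i<k. cs_h r s n + s n i)"

fun cs_base :: "(nat \<Rightarrow> nat) \<Rightarrow> (nat \<Rightarrow> nat \<Rightarrow> nat) \<Rightarrow> nat \<Rightarrow> real" where
  "cs_base r s 0 = 1"
| "cs_base r s (Suc n) = cs_base r s n + real (\<Sum>k<r n. s n k) * cs_width r (Suc n)"

fun cs_left :: "(nat \<Rightarrow> nat) \<Rightarrow> (nat \<Rightarrow> nat \<Rightarrow> nat) \<Rightarrow> nat \<Rightarrow> nat \<Rightarrow> real" where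
  "cs_left r s 0 p = 0"
| "cs_left r s (Suc n) p =
     (let k = (GREATEST k. k < r n \<and> cs_off r s n k \<le> p);
          q = p - cs_off r s n k
      in if q < cs_h r s n
         then cs_left r s n q + real k * cs_width r (Suc n)
         else cs_base r s n + real ((\<Sum>i<k. s n i) + (q - cs_h r s n)) * cs_width r (Suc n))"

definition cs_level :: "(nat \<Rightarrow> nat) \<Rightarrow> (nat \<Rightarrow> nat \<Rightarrow> nat) \<Rightarrow> nat \<Rightarrow> nat \<Rightarrow> real set" where
  "cs_level r s n j = {cs_left r s n j ..< cs_left r s n j + cs_width r n}"

definition cs_space :: "(nat \<Rightarrow> nat) \<Rightarrow> (nat \<Rightarrow> nat \<Rightarrow> nat) \<Rightarrow> real set" where
  "cs_space r s = (\<Union>n. \<Union>j<cs_h r s n. cs_level r s n j)"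

text \<open>T maps each level (other than the top one) to the level above by translation;
it is left as the identity on the null set where it is undefined and outside X.\<close>
definition cs_map :: "(nat \<Rightarrow> nat) \<Rightarrow> (nat \<Rightarrow> nat \<Rightarrow> nat) \<Rightarrow> real \<Rightarrow> real" where
  "cs_map r s x =
    (if \<exists>n j. Suc j < cs_h r s n \<and> x \<in> cs_level r s n j
     then (SOME y. \<exists>n j. Suc j < cs_h r s n \<and> x \<in> cs_level r s n j \<and>
                         y = x - cs_left r s n j + cs_left r s n (Suc j))
     else x)"

definition hgt :: "nat \<Rightarrow> nat" where
  "hgt n = 5 ^ (n * (n + 1) div 2)"

definition rr :: "nat \<Rightarrow> nat" where
  "rr n = n + 2"

definition Hset :: "nat \<Rightarrow> nat set" where
  "Hset n = {0}
     \<union> {j * 5 ^ (n * (n + 1) div 2) | j. 1 \<le> j \<and> j \<le> nat \<lceil>sqrt (real n)\<rceil>}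
     \<union> {5 ^ (n * (n + 1) div 2 + i) | i. nat \<lceil>sqrt (real n)\<rceil> \<le> i \<and> i \<le> n}"

text \<open>H_n lists (in increasing order) the heights at which the subcolumns start\<close>
definition Hoff :: "nat \<Rightarrow> nat \<Rightarrow> nat" where
  "Hoff n k = sorted_list_of_set (Hset n) ! k"

text \<open>spacers: determined by H_n for k < r_n - 1, and by h_(n+1) for the last subcolumn\<close>
definition spacer :: "nat \<Rightarrow> nat \<Rightarrow> nat" where
  "spacer n k = (if Suc k < rr n then Hoff n (Suc k) - Hoff n k - hgt n
                 else hgt (Suc n) - Hoff n k - hgt n)"

end

theory Submission
  imports Defs
begin

text \<open>The levels of \<open>C\<^sub>n\<close> are disjoint intervals of width \<open>w\<^sub>n\<close>, and while the first \<open>k + 1\<close>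
subcolumns of \<open>C\<^sub>n\<close> carry no spacers, \<open>T\<^bsup>i h\<^sub>n\<^esub>\<close> moves the \<open>j\<close>-th slice of each level onto
the \<open>(i + j)\<close>-th, a translation by \<open>i w\<^bsub>n+1\<^esub>\<close>. So if \<open>A\<close> misses less than one slice of the first
\<open>k + 1\<close> slices of some level, then \<open>x, x + w\<^bsub>n+1\<^esub>, \<dots>, x + k w\<^bsub>n+1\<^esub> \<in> A\<close> for a positive-measure set
of \<open>x\<close>, and \<open>h\<^sub>n\<close> is a common return time. Otherwise, whenever \<open>A\<close> misses at most a fraction
\<open>\<eta> \<le> 1 / (2 (k + 1))\<close> of a level, the first \<open>k + 1\<close> slices already miss a fraction \<open>1 / r\<^sub>n\<close> of
it, so another slice, which is a level of \<open>C\<^bsub>n+1\<^esub>\<close>, misses at most \<open>\<eta> - 1 / (2 r\<^sub>n)\<close>. Since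
\<open>\<Sum> 1 / r\<^sub>n\<close> diverges, iterating makes this fraction negative, contradicting the Lebesgue density
argument that supplies levels, in arbitrarily late columns, missed by \<open>A\<close> in an arbitrarily small
fraction.\<close>

lemma mult_add_less_inj:
  fixes a b i j m :: nat
  assumes "a * m + i = b * m + j" "i < m" "j < m"
  shows "a = b \<and> i = j"
proof -
  have "i = j"
    using arg_cong[OF assms(1), of "\<lambda>x. x mod m"] assms(2,3) by simp
  with assms show ?thesis by simp
qed

lemma prefix_sum_add_inj:
  fixes f :: "nat \<Rightarrow> nat"
  assumes eq: "(\<Sum>l<i. f l) + t = (\<Sum>l<j. f l) + u" and "t < f i" "u < f j"
  shows "i = j \<and> t = u"
proof -
  have less: False if "a < b" "(\<Sum>l<a. f l) + x = (\<Sum>l<b. f l) + y" "x < f a" for a b x y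
  proof -
    have "(\<Sum>l<Suc a. f l) \<le> (\<Sum>l<b. f l)"
      using that(1) by (intro sum_mono2) auto
    with that(2,3) show False by simp
  qed
  have "i = j"
    using less[OF _ eq assms(2)] less[OF _ eq[symmetric] assms(3)] by (cases i j rule: linorder_cases) auto
  with eq show ?thesis by simp
qed

lemma cell_index_unique:
  fixes w :: real and a b :: nat
  assumes "0 < w" "x \<in> {real a * w ..< real a * w + w}" "x \<in> {real b * w ..< real b * w + w}"
  shows "a = b"
proof -
  have "real a * w < (real b + 1) * w" "real b * w < (real a + 1) * w"
    using assms by (auto simp: algebra_simps)
  then have "real a < real b + 1" "real b < real a + 1"
    using assms(1) by (simp_all add: mult_less_cancel_right)
  then show ?thesis by linarith
qed

lemma not_summable_shifted_sums_unbounded: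
  fixes f :: "nat \<Rightarrow> real"
  assumes "\<And>i. 0 \<le> f i" and "\<not> summable f"
  shows "\<exists>t. B < (\<Sum>i<t. f (n + i))"
proof (rule ccontr)
  assume "\<not> ?thesis"
  then have "\<not> B < (\<Sum>i<Suc m. f (n + i))" for m
    by blast
  then have "(\<Sum>i\<le>m. f (i + n)) \<le> B" for m
    by (simp add: lessThan_Suc_atMost add.commute not_less)
  then have "summable (\<lambda>i. f (i + n))"
    using assms(1) by (intro bounded_imp_summable[of _ B])
  with assms(2) show False
    by simp
qed

lemma lmeasurable_Ico [simp]: "{a..<b::real} \<in> lmeasurable"
  by (cases "a \<le> b") (auto simp: fmeasurable_def)

definition uncovered :: "real set \<Rightarrow> real \<Rightarrow> real \<Rightarrow> real" where
  "uncovered A a b = measure lebesgue ({a..<b} - A)"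

lemma uncovered_nonneg: "0 \<le> uncovered A a b"
  by (simp add: uncovered_def)

lemma uncovered_split:
  assumes "A \<in> sets lebesgue" "a \<le> b" "b \<le> c"
  shows "uncovered A a c = uncovered A a b + uncovered A b c"
proof -
  have eq: "{a..<c} - A = ({a..<b} - A) \<union> ({b..<c} - A)"
    using assms by auto
  have "{a..<b} - A \<in> lmeasurable" "{b..<c} - A \<in> lmeasurable"
    using assms(1) by (auto intro: fmeasurable_Diff)
  then show ?thesis
    unfolding uncovered_def eq by (intro measure_Union) (auto simp: fmeasurable_def)
qed

lemma uncovered_slices:
  assumes "A \<in> sets lebesgue" "0 \<le> w" "m \<le> n"
  shows "uncovered A (a + real m * w) (a + real n * w)
       = (\<Sum>i\<in>{m..<n}. uncovered A (a + real i * w) (a + real (Suc i) * w))"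
  using assms(3)
proof (induction n rule: dec_induct)
  case (step n)
  have "uncovered A (a + real m * w) (a + real (Suc n) * w)
      = uncovered A (a + real m * w) (a + real n * w) + uncovered A (a + real n * w) (a + real (Suc n) * w)"
    using assms step.hyps by (intro uncovered_split) (auto intro!: mult_right_mono)
  with step.IH step.hyps show ?case by simp
qed (simp add: uncovered_def)

lemma common_translates_measure_pos:
  fixes A :: "real set"
  assumes A: "A \<in> sets lebesgue" and w: "0 < w"
    and small: "uncovered A a (a + real (Suc k) * w) < w"
  shows "0 < measure lebesgue {x \<in> {a..<a + w}. \<forall>j\<le>k. x + real j * w \<in> A}"
proof -
  let ?D = "{a..<a + w}" and ?S = "\<lambda>j. {a + real j * w..<a + real (Suc j) * w} - A"
  let ?B = "{x \<in> ?D. \<forall>j\<le>k. x + real j * w \<in> A}"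
  have shift: "(\<lambda>x. x + c) -` A = (+) (- c) ` A" for c
    by (auto simp: image_iff) (metis add.commute add_diff_cancel_left')
  have B: "?B = ?D \<inter> (\<Inter>j\<le>k. (+) (- (real j * w)) ` A)"
    unfolding shift[symmetric] by auto
  have "?D - ?B = (\<Union>j\<le>k. (\<lambda>x. x - real j * w) ` ?S j)"
    unfolding B shift[symmetric] by (auto simp: image_iff algebra_simps)
  then have "measure lebesgue (?D - ?B) \<le> (\<Sum>j\<le>k. measure lebesgue ((\<lambda>x. x - real j * w) ` ?S j))"
    using A by (simp add: measure_UNION_le fmeasurableD measurable_translation_subtract fmeasurable_Diff)
  also have "\<dots> = uncovered A a (a + real (Suc k) * w)"
    using uncovered_slices[OF A less_imp_le[OF w], of 0 "Suc k" a]
    by (simp add: measure_translation_subtract uncovered_def lessThan_Suc_atMost atLeast0LessThan)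
  also note small
  finally have lt: "measure lebesgue (?D - ?B) < w" .
  have Bm: "?B \<in> sets lebesgue"
    unfolding B using A by (intro sets.Int sets.finite_INT lebesgue_sets_translation) auto
  have "measure lebesgue (?D - ?B) = measure lebesgue ?D - measure lebesgue ?B"
  proof (rule measure_Diff)
    show "emeasure lebesgue ?D \<noteq> \<infinity>"
      using lmeasurable_Ico[of a "a + w"] by (simp add: fmeasurable_def)
  qed (rule fmeasurableD[OF lmeasurable_Ico], rule Bm, blast)
  moreover have "measure lebesgue ?D = w"
    using w by simp
  ultimately show ?thesis
    using lt by linarith
qed

locale rank_one =
  fixes r :: "nat \<Rightarrow> nat" and s :: "nat \<Rightarrow> nat \<Rightarrow> nat"
  assumes two_le_r: "2 \<le> r n"
begin

abbreviation "height \<equiv> cs_h r s"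
abbreviation "width \<equiv> cs_width r"
abbreviation "offset \<equiv> cs_off r s"
abbreviation "left \<equiv> cs_left r s"
abbreviation "level \<equiv> cs_level r s"
abbreviation "T \<equiv> cs_map r s"

section \<open>Columns and levels\<close>

lemma r_pos: "0 < r n"
  using two_le_r[of n] by simp

lemma height_pos: "0 < height n"
proof (induction n)
  case (Suc n)
  have "height n + s n 0 \<le> (\<Sum>k<r n. height n + s n k)"
    using r_pos[of n] by (intro member_le_sum) auto
  with Suc show ?case by simp
qed simp

lemma offset_0 [simp]: "offset n 0 = 0"
  by (simp add: cs_off_def)

lemma offset_Suc: "offset n (Suc i) = offset n i + height n + s n i"
  by (simp add: cs_off_def)

lemma offset_last: "offset n (r n) = height (Suc n)"
  by (simp add: cs_off_def)

lemma offset_mono: "i < j \<Longrightarrow> offset n i + height n \<le> offset n j"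
  by (induction j) (auto simp: offset_Suc less_Suc_eq)

lemma offset_spacer_free:
  assumes "\<forall>i<k. s n i = 0"
  shows "offset n k = k * height n"
  using assms by (induction k) (simp_all add: offset_Suc)

lemma offset_add_lt_height:
  assumes "i < r n" "q < height n"
  shows "offset n i + q < height (Suc n)"
  using offset_mono[of i "r n" n] assms offset_last[of n] by simp

lemma width_Suc: "width n = real (r n) * width (Suc n)"
  using r_pos[of n] by (simp add: cs_width_def field_simps prod_pos)

lemma width_pos: "0 < width n"
  using r_pos by (simp add: cs_width_def prod_pos)

lemma width_le: "width n \<le> 1 / real (Suc n)"
proof -
  have "real (Suc n) \<le> (\<Prod>i<n. real (r i))"
  proof (induction n)
    case (Suc n)
    have "Suc (Suc n) \<le> Suc n * r n"
      using mult_le_mono2[OF two_le_r[of n], of "Suc n"] by simp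
    then have "real (Suc (Suc n)) \<le> real (Suc n) * real (r n)"
      by (metis of_nat_le_iff of_nat_mult)
    also have "\<dots> \<le> (\<Prod>i<n. real (r i)) * real (r n)"
      using Suc by (intro mult_right_mono) auto
    finally show ?case by simp
  qed simp
  then show ?thesis
    by (simp add: cs_width_def divide_simps)
qed

definition subcolumn :: "nat \<Rightarrow> nat \<Rightarrow> nat" where
  "subcolumn n p = (GREATEST k. k < r n \<and> offset n k \<le> p)"

lemma subcolumn_offset_add:
  assumes "i < r n" "q < height n + s n i"
  shows "subcolumn n (offset n i + q) = i"
  unfolding subcolumn_def
proof (rule Greatest_equality)
  fix j assume j: "j < r n \<and> offset n j \<le> offset n i + q"
  show "j \<le> i"
  proof (rule ccontr)
    assume "\<not> j \<le> i"
    then have "offset n (Suc i) \<le> offset n j"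
      using offset_mono[of "Suc i" j n] by (cases "Suc i = j") auto
    with j assms show False by (simp add: offset_Suc)
  qed
qed (use assms in simp)

lemma position_decompose:
  assumes "p < height (Suc n)"
  obtains i q where "i < r n" "q < height n + s n i" "p = offset n i + q"
proof -
  let ?P = "\<lambda>k. k < r n \<and> offset n k \<le> p"
  let ?i = "subcolumn n p"
  have "?P ?i"
    unfolding subcolumn_def using r_pos[of n] by (intro GreatestI_nat[of ?P 0 "r n"]) auto
  moreover have "p < offset n ?i + height n + s n ?i"
  proof (rule ccontr)
    assume "\<not> ?thesis"
    then have le: "offset n (Suc ?i) \<le> p" by (simp add: offset_Suc)
    show False
    proof (cases "Suc ?i < r n")
      case True
      then have "Suc ?i \<le> ?i"
        using le unfolding subcolumn_def by (intro Greatest_le_nat[of ?P _ "r n"]) auto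
      then show False by simp
    next
      case False
      with \<open>?P ?i\<close> have "Suc ?i = r n" by simp
      with le assms offset_last[of n] show False by simp
    qed
  qed
  ultimately show ?thesis
    using that[of ?i "p - offset n ?i"] by simp
qed

fun base_idx :: "nat \<Rightarrow> nat" where
  "base_idx 0 = 1"
| "base_idx (Suc n) = base_idx n * r n + (\<Sum>k<r n. s n k)"

text \<open>The levels of \<open>C\<^sub>n\<close> are cells of the grid of mesh \<open>width n\<close>: level \<open>p\<close> is the cell
with index \<open>left_idx n p\<close>, and all these indices lie below \<open>base_idx n\<close>, where the spacers of
stage \<open>n\<close> begin.\<close>

fun left_idx :: "nat \<Rightarrow> nat \<Rightarrow> nat" where
  "left_idx 0 p = 0"
| "left_idx (Suc n) p = (let k = subcolumn n p; q = p - offset n k in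
     if q < height n then left_idx n q * r n + k
     else base_idx n * r n + ((\<Sum>i<k. s n i) + (q - height n)))"

lemma base_eq: "cs_base r s n = real (base_idx n) * width n"
proof (induction n)
  case (Suc n)
  then show ?case using width_Suc[of n] by (simp add: algebra_simps)
qed (simp add: cs_width_def)

lemma left_eq: "left n p = real (left_idx n p) * width n"
proof (induction n arbitrary: p)
  case (Suc n)
  show ?case
    unfolding cs_left.simps(2) left_idx.simps(2) subcolumn_def[symmetric] Let_def
    using Suc width_Suc[of n] base_eq[of n] by (simp add: algebra_simps)
qed simp

declare left_idx.simps(2) [simp del] cs_left.simps(2) [simp del]

lemma left_idx_copy:
  assumes "i < r n" "q < height n"
  shows "left_idx (Suc n) (offset n i + q) = left_idx n q * r n + i"
  using subcolumn_offset_add[of i n q] assms by (simp add: Let_def left_idx.simps(2))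

lemma left_idx_spacer:
  assumes "i < r n" "height n \<le> q" "q < height n + s n i"
  shows "left_idx (Suc n) (offset n i + q) = base_idx n * r n + ((\<Sum>l<i. s n l) + (q - height n))"
  using subcolumn_offset_add[of i n q] assms by (simp add: Let_def left_idx.simps(2))

lemma left_idx_copy_less:
  assumes bound: "\<forall>p<height n. left_idx n p < base_idx n" and "i < r n" "q < height n"
  shows "left_idx (Suc n) (offset n i + q) < base_idx n * r n"
proof -
  have "left_idx n q * r n + i < (left_idx n q + 1) * r n"
    using assms(2) by simp
  also have "\<dots> \<le> base_idx n * r n"
    using bound assms(3) by (intro mult_right_mono) auto
  finally show ?thesis
    using assms(2,3) by (simp add: left_idx_copy)
qed

lemma left_idx_Suc_less:
  assumes bound: "\<forall>p<height n. left_idx n p < base_idx n"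
    and "i < r n" "q < height n + s n i"
  shows "left_idx (Suc n) (offset n i + q) < base_idx (Suc n)"
proof (cases "q < height n")
  case True
  then show ?thesis
    using left_idx_copy_less[OF bound assms(2)] by fastforce
next
  case False
  have "(\<Sum>l<Suc i. s n l) \<le> (\<Sum>l<r n. s n l)"
    using assms(2) by (intro sum_mono2) auto
  then show ?thesis
    using False assms(2,3) by (simp add: left_idx_spacer)
qed

lemma left_idx_Suc_inj:
  assumes bound: "\<forall>p<height n. left_idx n p < base_idx n"
    and inj: "inj_on (left_idx n) {..<height n}"
    and i: "i < r n" "q < height n + s n i" and j: "j < r n" "u < height n + s n j"
    and eq: "left_idx (Suc n) (offset n i + q) = left_idx (Suc n) (offset n j + u)"
  shows "i = j \<and> q = u"
proof -
  consider "q < height n" "u < height n" | "q < height n" "\<not> u < height n"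
    | "\<not> q < height n" "u < height n" | "\<not> q < height n" "\<not> u < height n"
    by blast
  then show ?thesis
  proof cases
    case 1
    with eq i j have "left_idx n q = left_idx n u \<and> i = j"
      using mult_add_less_inj[of "left_idx n q" "r n" i "left_idx n u" j] by (simp add: left_idx_copy)
    with 1 inj show ?thesis by (auto dest: inj_onD)
  next
    case 2
    with left_idx_copy_less[OF bound i(1) 2(1)] eq i j show ?thesis by (simp add: left_idx_spacer)
  next
    case 3
    with left_idx_copy_less[OF bound j(1) 3(2)] eq i j show ?thesis by (simp add: left_idx_spacer)
  next
    case 4
    with eq i j have "(\<Sum>l<i. s n l) + (q - height n) = (\<Sum>l<j. s n l) + (u - height n)"
      by (simp add: left_idx_spacer)
    then have "i = j \<and> q - height n = u - height n"
      using 4 i j by (intro prefix_sum_add_inj) (simp_all, linarith+)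
    with 4 show ?thesis by linarith
  qed
qed

lemma left_idx_bounded_inj:
  "(\<forall>p<height n. left_idx n p < base_idx n) \<and> inj_on (left_idx n) {..<height n}"
proof (induction n)
  case (Suc n)
  then have bound: "\<forall>p<height n. left_idx n p < base_idx n"
    and inj: "inj_on (left_idx n) {..<height n}" by auto
  have "left_idx (Suc n) p < base_idx (Suc n)" if "p < height (Suc n)" for p
    using that position_decompose left_idx_Suc_less[OF bound] by metis
  moreover have "inj_on (left_idx (Suc n)) {..<height (Suc n)}"
  proof (rule inj_onI)
    fix p p' assume "p \<in> {..<height (Suc n)}" "p' \<in> {..<height (Suc n)}"
      and eq: "left_idx (Suc n) p = left_idx (Suc n) p'"
    then have "p < height (Suc n)" "p' < height (Suc n)" by simp_all
    then obtain i q j u where "i < r n" "q < height n + s n i" "p = offset n i + q"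
      and "j < r n" "u < height n + s n j" "p' = offset n j + u"
      by (metis position_decompose)
    with eq left_idx_Suc_inj[OF bound inj] show "p = p'" by metis
  qed
  ultimately show ?case by simp
qed (simp add: inj_on_def)

lemma level_eq_cell: "level n j = {real (left_idx n j) * width n ..< real (left_idx n j) * width n + width n}"
  by (simp add: cs_level_def left_eq)

lemma level_unique:
  assumes "j < height n" "j' < height n" "x \<in> level n j" "x \<in> level n j'"
  shows "j = j'"
proof -
  have "left_idx n j = left_idx n j'"
    using cell_index_unique[OF width_pos] assms(3,4) by (simp add: level_eq_cell)
  with left_idx_bounded_inj[of n] assms(1,2) show ?thesis
    by (auto dest: inj_onD)
qed

lemma left_Suc:
  assumes "i < r n" "q < height n"
  shows "left (Suc n) (offset n i + q) = left n q + real i * width (Suc n)"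
  unfolding left_eq left_idx_copy[OF assms] using width_Suc[of n] by (simp add: algebra_simps)

lemma level_Suc_subset:
  assumes "i < r n" "q < height n"
  shows "level (Suc n) (offset n i + q) \<subseteq> level n q"
proof -
  have "(real i + 1) * width (Suc n) \<le> real (r n) * width (Suc n)"
    using assms(1) width_pos[of "Suc n"] by (intro mult_right_mono) auto
  then show ?thesis
    using left_Suc[OF assms] width_Suc[of n] width_pos[of "Suc n"] by (auto simp: cs_level_def algebra_simps)
qed

lemma level_covered:
  assumes "x \<in> level n q" "q < height n"
  obtains i where "i < r n" "x \<in> level (Suc n) (offset n i + q)"
proof -
  let ?w = "width (Suc n)" and ?a = "left n q"
  have w: "0 < ?w" by (rule width_pos)
  have x: "?a \<le> x" "x < ?a + real (r n) * ?w"
    using assms(1) width_Suc[of n] by (auto simp: cs_level_def)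
  define i where "i = nat \<lfloor>(x - ?a) / ?w\<rfloor>"
  have "real i \<le> (x - ?a) / ?w" "(x - ?a) / ?w < real i + 1"
    using x w by (auto simp: i_def)
  moreover have "(x - ?a) / ?w < real (r n)"
    using x w by (simp add: field_simps)
  ultimately have "i < r n"
    by linarith
  moreover have "real i * ?w \<le> x - ?a" "x - ?a < real i * ?w + ?w"
    using w \<open>real i \<le> (x - ?a) / ?w\<close> \<open>(x - ?a) / ?w < real i + 1\<close> by (simp_all add: field_simps)
  ultimately show ?thesis
    using that[of i] left_Suc[OF _ assms(2)] by (simp add: cs_level_def)
qed

lemma level_persists:
  assumes "x \<in> level n j" "j < height n" "n \<le> N"
  shows "\<exists>j'<height N. x \<in> level N j'"
  using assms(3)
proof (induction N rule: dec_induct)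
  case (step m)
  then obtain j' where j': "j' < height m" "x \<in> level m j'" by blast
  obtain i where "i < r m" "x \<in> level (Suc m) (offset m i + j')"
    by (rule level_covered[OF j'(2,1)])
  then show ?case
    using offset_add_lt_height j'(1) by blast
qed (use assms in blast)

lemma nontop_level_persists:
  assumes "Suc j < height n" "x \<in> level n j" "n \<le> N"
  shows "\<exists>j'. Suc j' < height N \<and> x \<in> level N j' \<and>
           left N (Suc j') - left N j' = left n (Suc j) - left n j"
  using assms(3)
proof (induction N rule: dec_induct)
  case (step m)
  then obtain j' where j': "Suc j' < height m" "x \<in> level m j'"
    "left m (Suc j') - left m j' = left n (Suc j) - left n j"
    by blast
  obtain i where i: "i < r m" "x \<in> level (Suc m) (offset m i + j')"
    by (rule level_covered[OF j'(2) Suc_lessD[OF j'(1)]])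
  have "left (Suc m) (Suc (offset m i + j')) - left (Suc m) (offset m i + j') = left m (Suc j') - left m j'"
    using left_Suc[OF i(1) j'(1)] left_Suc[OF i(1) Suc_lessD[OF j'(1)]] by simp
  with i j' offset_add_lt_height[OF i(1) j'(1)] show ?case
    by (intro exI[of _ "offset m i + j'"]) simp
qed (use assms in blast)

section \<open>The map \<open>T\<close>\<close>

text \<open>Two witnesses for the \<open>SOME\<close> in \<open>cs_map\<close> are refined by a common nontop level of a later
column with the same shift, so the choice does not matter.\<close>

lemma T_level:
  assumes "Suc j < height n" "x \<in> level n j"
  shows "T x = x - left n j + left n (Suc j)"
proof -
  let ?P = "\<lambda>y. \<exists>n j. Suc j < height n \<and> x \<in> level n j \<and> y = x - left n j + left n (Suc j)"
  have unique: "y = x - left n j + left n (Suc j)" if "?P y" for y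
  proof -
    obtain n' j' where nj': "Suc j' < height n'" "x \<in> level n' j'" "y = x - left n' j' + left n' (Suc j')"
      using \<open>?P y\<close> by blast
    let ?N = "max n n'"
    obtain a where a: "Suc a < height ?N" "x \<in> level ?N a"
      "left ?N (Suc a) - left ?N a = left n (Suc j) - left n j"
      using nontop_level_persists[OF assms, of ?N] by auto
    obtain b where b: "Suc b < height ?N" "x \<in> level ?N b"
      "left ?N (Suc b) - left ?N b = left n' (Suc j') - left n' j'"
      using nontop_level_persists[OF nj'(1,2), of ?N] by auto
    have "a = b"
      using level_unique[of a ?N b x] a b by simp
    with a(3) b(3) nj'(3) show ?thesis by simp
  qed
  have "\<exists>n j. Suc j < height n \<and> x \<in> level n j"
    using assms by blast
  then have "T x = (SOME y. ?P y)"
    unfolding cs_map_def by (rule if_P)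
  also have "\<dots> = x - left n j + left n (Suc j)"
    by (rule some_equality) (use assms unique in blast)+
  finally show ?thesis .
qed

lemma T_pow_level:
  assumes "x \<in> level n p" "p + m < height n"
  shows "(T ^^ m) x = x - left n p + left n (p + m)"
  using assms(2)
proof (induction m)
  case (Suc m)
  then have IH: "(T ^^ m) x = x - left n p + left n (p + m)" by simp
  with assms(1) have "(T ^^ m) x \<in> level n (p + m)"
    by (simp add: cs_level_def)
  with Suc.prems have "T ((T ^^ m) x) = (T ^^ m) x - left n (p + m) + left n (Suc (p + m))"
    by (intro T_level) simp_all
  with IH show ?case by simp
qed simp

lemma T_pow_slice:
  assumes spacer_free: "\<forall>l<k. s N l = 0" and k: "k < r N" and q: "q < height N"
    and ji: "j + i \<le> k" and x: "x \<in> level (Suc N) (offset N j + q)"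
  shows "(T ^^ (i * height N)) x = x + real i * width (Suc N)"
proof -
  have "offset N j = j * height N" "offset N (j + i) = (j + i) * height N"
    using spacer_free ji by (auto intro!: offset_spacer_free)
  then have shifted: "offset N j + q + i * height N = offset N (j + i) + q"
    by (simp add: algebra_simps)
  have j: "j < r N" and ji': "j + i < r N"
    using k ji by auto
  have "(T ^^ (i * height N)) x
      = x - left (Suc N) (offset N j + q) + left (Suc N) (offset N j + q + i * height N)"
    using offset_add_lt_height[OF ji' q] shifted by (intro T_pow_level[OF x]) simp
  also have "\<dots> = x + real i * width (Suc N)"
    unfolding shifted left_Suc[OF j q] left_Suc[OF ji' q] by (simp add: algebra_simps)
  finally show ?thesis .
qed

lemma T_image_sets:
  assumes S: "S \<in> sets lebesgue"
  shows "T ` S \<in> sets lebesgue"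
proof -
  let ?I = "{(n, j). Suc j < height n}"
  let ?NT = "\<Union>(n, j)\<in>?I. level n j"
  let ?F = "\<lambda>(n, j). (\<lambda>x. (left n (Suc j) - left n j) + x) ` (S \<inter> level n j)"
  have fixed: "T x = x" if "x \<notin> ?NT" for x
    using that unfolding cs_map_def by auto
  have "T ` S = (\<Union>nj\<in>?I. ?F nj) \<union> (S - ?NT)"
  proof (intro equalityI subsetI)
    fix y assume "y \<in> T ` S"
    then obtain x where x: "x \<in> S" "y = T x" by auto
    show "y \<in> (\<Union>nj\<in>?I. ?F nj) \<union> (S - ?NT)"
    proof (cases "x \<in> ?NT")
      case True
      then obtain n j where "Suc j < height n" "x \<in> level n j" by auto
      with x T_level show ?thesis by force
    qed (use x fixed in auto)
  next
    fix y assume "y \<in> (\<Union>nj\<in>?I. ?F nj) \<union> (S - ?NT)"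
    then show "y \<in> T ` S"
    proof
      assume "y \<in> (\<Union>nj\<in>?I. ?F nj)"
      then obtain n j x where "Suc j < height n" "x \<in> S" "x \<in> level n j"
        "y = (left n (Suc j) - left n j) + x" by auto
      with T_level show ?thesis by (metis add.commute add_diff_eq imageI)
    qed (use fixed in force)
  qed
  moreover have "level n j \<in> sets lebesgue" for n j
    by (simp add: cs_level_def)
  then have "(\<Union>nj\<in>?I. ?F nj) \<in> sets lebesgue" "?NT \<in> sets lebesgue"
    using S by (auto intro!: sets.countable_UN lebesgue_sets_translation)
  ultimately show ?thesis
    using S by (simp add: sets.Un sets.Diff)
qed

lemma T_pow_image_sets: "S \<in> sets lebesgue \<Longrightarrow> (T ^^ m) ` S \<in> sets lebesgue"
proof (induction m)
  case (Suc m)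
  have "(T ^^ Suc m) ` S = T ` ((T ^^ m) ` S)"
    by (simp add: image_comp)
  with Suc T_image_sets show ?case by simp
qed simp

section \<open>Levels nearly filled by a set of positive measure\<close>

lemma measure_level: "measure lebesgue (level n j) = width n"
  using width_pos[of n] by (simp add: cs_level_def)

lemma uncovered_union_levels:
  assumes A: "A \<in> sets lebesgue" and J: "J \<subseteq> {..<height N}"
    and uncovered: "\<forall>j\<in>J. \<eta> * width N \<le> uncovered A (left N j) (left N j + width N)"
  shows "\<eta> * measure lebesgue (\<Union>j\<in>J. level N j) \<le> measure lebesgue ((\<Union>j\<in>J. level N j) - A)"
proof -
  have fin: "finite J"
    using J finite_subset by blast
  have disj: "disjoint_family_on (level N) J"
    using J level_unique unfolding disjoint_family_on_def by blast
  then have disj': "disjoint_family_on (\<lambda>j. level N j - A) J"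
    unfolding disjoint_family_on_def by blast
  have lm: "level N j \<in> lmeasurable" "level N j - A \<in> lmeasurable" for j
    using A by (auto simp: cs_level_def intro: fmeasurable_Diff)
  then have fin_measure: "emeasure lebesgue (level N j) \<noteq> \<infinity>" "emeasure lebesgue (level N j - A) \<noteq> \<infinity>" for j
    by (metis fmeasurableD2 infinity_ennreal_def)+
  have "measure lebesgue (\<Union>j\<in>J. level N j) = (\<Sum>j\<in>J. measure lebesgue (level N j))"
    by (rule measure_finite_Union[OF fin _ disj]) (use lm fin_measure in \<open>blast intro: fmeasurableD\<close>)+
  then have "\<eta> * measure lebesgue (\<Union>j\<in>J. level N j) = (\<Sum>j\<in>J. \<eta> * measure lebesgue (level N j))"
    by (simp add: sum_distrib_left)
  also have "\<dots> \<le> (\<Sum>j\<in>J. measure lebesgue (level N j - A))"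
    unfolding measure_level using uncovered by (intro sum_mono) (simp add: uncovered_def cs_level_def)
  also have "\<dots> = measure lebesgue (\<Union>j\<in>J. level N j - A)"
    by (rule measure_finite_Union[OF fin _ disj', symmetric]) (use lm fin_measure in \<open>blast intro: fmeasurableD\<close>)+
  also have "(\<Union>j\<in>J. level N j - A) = (\<Union>j\<in>J. level N j) - A"
    by blast
  finally show ?thesis .
qed

definition levels_within :: "real set \<Rightarrow> nat \<Rightarrow> real set" where
  "levels_within U N = (\<Union>j\<in>{j. j < height N \<and> level N j \<subseteq> U}. level N j)"

lemma incseq_levels_within: "incseq (levels_within U)"
proof (rule incseq_SucI, rule subsetI)
  fix N x assume "x \<in> levels_within U N"
  then obtain j where j: "j < height N" "level N j \<subseteq> U" "x \<in> level N j"
    unfolding levels_within_def by auto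
  obtain i where i: "i < r N" "x \<in> level (Suc N) (offset N i + j)"
    by (rule level_covered[OF j(3,1)])
  then show "x \<in> levels_within U (Suc N)"
    using offset_add_lt_height[OF i(1) j(1)] level_Suc_subset[OF i(1) j(1)] j(2)
    unfolding levels_within_def by blast
qed

lemma levels_within_exhaust:
  assumes "open U" "x \<in> U" "x \<in> level n j" "j < height n"
  shows "\<exists>N. x \<in> levels_within U N"
proof -
  obtain e where e: "0 < e" "ball x e \<subseteq> U"
    using assms(1,2) open_contains_ball by blast
  obtain N where N: "inverse (real (Suc N)) < e"
    using reals_Archimedean[OF e(1)] by blast
  let ?N = "max N n"
  obtain j' where j': "j' < height ?N" "x \<in> level ?N j'"
    using level_persists[OF assms(3,4), of ?N] by auto
  have "width ?N \<le> 1 / real (Suc ?N)"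
    by (rule width_le)
  also have "\<dots> \<le> 1 / real (Suc N)"
    by (intro divide_left_mono) auto
  finally have "width ?N < e"
    using N by (simp add: inverse_eq_divide)
  then have "level ?N j' \<subseteq> ball x e"
    using j'(2) by (auto simp: cs_level_def dist_real_def)
  then show ?thesis
    using j' e(2) unfolding levels_within_def by blast
qed

lemma levels_within_lmeasurable: "levels_within U N \<in> lmeasurable"
  unfolding levels_within_def by (intro fmeasurable.finite_UN) (auto simp: cs_level_def)

lemma measure_levels_within_approx:
  assumes A0: "A0 \<in> lmeasurable" "A0 \<subseteq> level n j" "j < height n"
    and U: "open U" "A0 \<subseteq> U" and c: "c < measure lebesgue A0"
  shows "\<exists>N0. \<forall>N\<ge>N0. c < measure lebesgue (A0 \<inter> levels_within U N)"
proof -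
  have un: "(\<Union>N. A0 \<inter> levels_within U N) = A0"
  proof (intro equalityI subsetI)
    fix x assume "x \<in> A0"
    with levels_within_exhaust[OF U(1) _ _ A0(3)] A0(2) U(2) obtain N where "x \<in> levels_within U N"
      by blast
    with \<open>x \<in> A0\<close> show "x \<in> (\<Union>N. A0 \<inter> levels_within U N)"
      by blast
  qed blast
  have lm: "A0 \<inter> levels_within U N \<in> lmeasurable" for N
    by (rule fmeasurable_Int_fmeasurable[OF A0(1) fmeasurableD[OF levels_within_lmeasurable]])
  have "(\<lambda>N. measure lebesgue (A0 \<inter> levels_within U N)) \<longlonglongrightarrow> measure lebesgue (\<Union>N. A0 \<inter> levels_within U N)"
  proof (rule Lim_measure_incseq)
    show "range (\<lambda>N. A0 \<inter> levels_within U N) \<subseteq> sets lebesgue"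
      using lm by (blast intro: fmeasurableD)
    show "incseq (\<lambda>N. A0 \<inter> levels_within U N)"
      using incseq_levels_within unfolding incseq_def by blast
    show "emeasure lebesgue (\<Union>N. A0 \<inter> levels_within U N) \<noteq> \<infinity>"
      unfolding un by (metis fmeasurableD2 infinity_ennreal_def A0(1))
  qed
  then have "(\<lambda>N. measure lebesgue (A0 \<inter> levels_within U N)) \<longlonglongrightarrow> measure lebesgue A0"
    by (simp only: un)
  then have "eventually (\<lambda>N. c < measure lebesgue (A0 \<inter> levels_within U N)) sequentially"
    using c by (rule order_tendstoD(1))
  then show ?thesis
    by (simp add: eventually_sequentially)
qed

lemma level_with_positive_part:
  assumes A: "A \<in> sets lebesgue" "A \<subseteq> cs_space r s" "0 < emeasure lebesgue A"
  obtains n j where "j < height n" "emeasure lebesgue (A \<inter> level n j) \<noteq> 0"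
proof (rule ccontr)
  assume "\<not> thesis"
  with that have "A \<inter> level n j \<in> null_sets lebesgue" if "j < height n" for n j
    using that A(1) by (intro null_setsI) (auto simp: cs_level_def)
  then have "(\<Union>(n, j)\<in>{(n, j). j < height n}. A \<inter> level n j) \<in> null_sets lebesgue"
    by (intro null_sets_UN') auto
  moreover have "(\<Union>(n, j)\<in>{(n, j). j < height n}. A \<inter> level n j) = A"
    using A(2) unfolding cs_space_def by auto
  ultimately show False
    using A(3) by auto
qed

lemma nearly_filled_level_exists:
  assumes A: "A \<in> sets lebesgue" "A \<subseteq> cs_space r s" "0 < emeasure lebesgue A" and \<eta>: "0 < \<eta>"
  shows "\<exists>n\<ge>M. \<exists>q<height n. uncovered A (left n q) (left n q + width n) \<le> \<eta> * width n"
proof -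
  obtain n j where j: "j < height n" and pos: "emeasure lebesgue (A \<inter> level n j) \<noteq> 0"
    using level_with_positive_part[OF A] .
  define A0 where "A0 = A \<inter> level n j"
  have A0: "A0 \<in> lmeasurable"
    unfolding A0_def Int_commute[of A] by (rule fmeasurable_Int_fmeasurable[OF _ A(1)]) (simp add: cs_level_def)
  define \<alpha> where "\<alpha> = measure lebesgue A0"
  have \<alpha>: "0 < \<alpha>"
    using pos emeasure_eq_measure2[OF A0] unfolding A0_def \<alpha>_def
    by (metis ennreal_0 measure_nonneg order_less_le)
  obtain U where U: "open U" "A0 \<subseteq> U" "U - A0 \<in> lmeasurable"
    "emeasure lebesgue (U - A0) < ennreal (\<eta> * \<alpha> / 2)"
    using sets_lebesgue_outer_open[OF fmeasurableD[OF A0], of "\<eta> * \<alpha> / 2"] \<eta> \<alpha> by auto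
  have U_small: "measure lebesgue (U - A0) < \<eta> * \<alpha> / 2"
    using U(3,4) \<eta> \<alpha> by (simp add: emeasure_eq_measure2 ennreal_less_iff)
  obtain N0 where N0: "\<forall>N\<ge>N0. \<alpha> / 2 < measure lebesgue (A0 \<inter> levels_within U N)"
    using measure_levels_within_approx[OF A0 _ j U(1,2), of "\<alpha> / 2"] \<alpha> unfolding A0_def \<alpha>_def by auto
  let ?N = "max N0 M"
  let ?G = "levels_within U ?N"
  have "\<alpha> / 2 < measure lebesgue (A0 \<inter> ?G)"
    using N0 by simp
  also have "\<dots> \<le> measure lebesgue ?G"
    using fmeasurable_Int_fmeasurable[OF A0 fmeasurableD[OF levels_within_lmeasurable]]
    by (intro measure_mono_fmeasurable[OF Int_lower2 fmeasurableD levels_within_lmeasurable])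
  finally have G_large: "\<alpha> / 2 < measure lebesgue ?G" .
  show ?thesis
  proof (rule ccontr)
    assume no_filled: "\<not> ?thesis"
    have "\<eta> * width ?N \<le> uncovered A (left ?N q) (left ?N q + width ?N)"
      if "q \<in> {q. q < height ?N \<and> level ?N q \<subseteq> U}" for q
    proof -
      have "q < height ?N"
        using that by simp
      with no_filled have "\<not> uncovered A (left ?N q) (left ?N q + width ?N) \<le> \<eta> * width ?N"
        using max.cobounded2 by blast
      then show ?thesis by simp
    qed
    then have "\<eta> * measure lebesgue ?G \<le> measure lebesgue (?G - A)"
      unfolding levels_within_def by (intro uncovered_union_levels[OF A(1)]) blast+
    also have "\<dots> \<le> measure lebesgue (U - A0)"
    proof (rule measure_mono_fmeasurable[OF _ _ U(3)])
      show "?G - A \<subseteq> U - A0"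
        unfolding levels_within_def A0_def by blast
      show "?G - A \<in> sets lebesgue"
        using fmeasurableD[OF levels_within_lmeasurable] A(1) by (rule sets.Diff)
    qed
    also note U_small
    finally show False
      using G_large \<eta> by (simp add: mult_strict_left_mono not_less)
  qed
qed

section \<open>Multiple recurrence\<close>

lemma multiple_return_if_slices_filled:
  assumes A: "A \<in> sets lebesgue" and spacer_free: "\<forall>l<k. s N l = 0" and k: "k < r N"
    and q: "q < height N"
    and filled: "uncovered A (left N q) (left N q + real (Suc k) * width (Suc N)) < width (Suc N)"
  shows "0 < emeasure lebesgue (\<Inter>i\<in>{0..k}. (T ^^ (i * height N)) ` A)"
proof -
  let ?w = "width (Suc N)" and ?a = "left N q"
  let ?I = "\<Inter>i\<in>{0..k}. (T ^^ (i * height N)) ` A"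
  define B where "B = {x \<in> {?a..<?a + ?w}. \<forall>j\<le>k. x + real j * ?w \<in> A}"
  have sub: "(+) (real k * ?w) ` B \<subseteq> ?I"
  proof (intro subsetI INT_I)
    fix y i assume "y \<in> (+) (real k * ?w) ` B" "i \<in> {0..k}"
    then obtain x where x: "x \<in> B" "y = real k * ?w + x" and i: "i \<le> k"
      by (auto simp del: of_nat_add)
    let ?z = "x + real (k - i) * ?w"
    have zA: "?z \<in> A"
      using x(1) diff_le_self[of k i] unfolding B_def by blast
    have "?z \<in> level (Suc N) (offset N (k - i) + q)"
      using x(1) k left_Suc[OF _ q, of "k - i"] unfolding B_def cs_level_def by simp
    then have "(T ^^ (i * height N)) ?z = ?z + real i * ?w"
      using i by (intro T_pow_slice[OF spacer_free k q]) simp_all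
    also have "\<dots> = y"
      using i x(2) by (simp add: of_nat_diff algebra_simps)
    finally show "y \<in> (T ^^ (i * height N)) ` A"
      using zA by (metis imageI)
  qed
  have "0 < measure lebesgue ((+) (real k * ?w) ` B)"
    unfolding measure_translation B_def using common_translates_measure_pos[OF A width_pos filled] .
  then have "0 < emeasure lebesgue ((+) (real k * ?w) ` B)"
    unfolding measure_def by (metis enn2real_0 less_irrefl zero_less_iff_neq_zero)
  also have "\<dots> \<le> emeasure lebesgue ?I"
    using A T_pow_image_sets by (intro emeasure_mono[OF sub] sets.finite_INT) simp_all
  finally show ?thesis .
qed

lemma uncovered_level_descent:
  assumes A: "A \<in> sets lebesgue" and k: "Suc k < r n" and q: "q < height n"
    and filled: "uncovered A (left n q) (left n q + width n) \<le> \<eta> * width n"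
    and \<eta>: "\<eta> * real (Suc k) \<le> 1 / 2"
    and first_slices: "width (Suc n) \<le> uncovered A (left n q) (left n q + real (Suc k) * width (Suc n))"
  shows "\<exists>q'<height (Suc n). uncovered A (left (Suc n) q') (left (Suc n) q' + width (Suc n))
           \<le> (\<eta> - 1 / (2 * real (r n))) * width (Suc n)"
proof (rule ccontr)
  assume no_descent: "\<not> ?thesis"
  let ?a = "left n q" and ?w = "width (Suc n)" and ?r = "r n"
  let ?d = "\<lambda>i. uncovered A (?a + real i * ?w) (?a + real (Suc i) * ?w)"
  let ?c = "\<eta> - 1 / (2 * real ?r)"
  have w: "0 < ?w" by (rule width_pos)
  have slice: "?c * ?w < ?d i" if "i < ?r" for i
    using no_descent offset_add_lt_height[OF that q] left_Suc[OF that q] by (auto simp: algebra_simps)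
  have "uncovered A ?a (?a + real ?r * ?w) = (\<Sum>i\<in>{0..<?r}. ?d i)"
    using uncovered_slices[OF A less_imp_le[OF w], of 0 ?r ?a] by simp
  also have "\<dots> = (\<Sum>i\<in>{0..<Suc k}. ?d i) + (\<Sum>i\<in>{Suc k..<?r}. ?d i)"
    using k by (intro sum.atLeastLessThan_concat[symmetric]) simp_all
  also have "(\<Sum>i\<in>{0..<Suc k}. ?d i) = uncovered A ?a (?a + real (Suc k) * ?w)"
    using uncovered_slices[OF A less_imp_le[OF w], of 0 "Suc k" ?a] by simp
  finally have split: "uncovered A ?a (?a + real ?r * ?w)
      = uncovered A ?a (?a + real (Suc k) * ?w) + (\<Sum>i\<in>{Suc k..<?r}. ?d i)" .
  have lower: "real (?r - Suc k) * (?c * ?w) < (\<Sum>i\<in>{Suc k..<?r}. ?d i)"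
    using sum_strict_mono[of "{Suc k..<?r}" "\<lambda>_. ?c * ?w" ?d] slice k by simp
  have upper: "?w + (\<Sum>i\<in>{Suc k..<?r}. ?d i) \<le> \<eta> * (real ?r * ?w)"
    using split filled first_slices width_Suc[of n] by simp
  have "\<eta> * (real ?r * ?w) \<le> ?w + real (?r - Suc k) * (?c * ?w)"
  proof -
    have half: "(real ?r - real (Suc k)) * (1 / (2 * real ?r)) \<le> 1 / 2"
      using r_pos[of n] by (simp add: field_simps)
    have "\<eta> * real ?r = (real ?r - real (Suc k)) * \<eta> + \<eta> * real (Suc k)"
      by (simp add: algebra_simps)
    then have "\<eta> * real ?r \<le> 1 + (real ?r - real (Suc k)) * ?c"
      using \<eta> half unfolding right_diff_distrib by linarith
    then have "\<eta> * real ?r * ?w \<le> (1 + (real ?r - real (Suc k)) * ?c) * ?w"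
      using w by (intro mult_right_mono) auto
    then show ?thesis
      using k by (simp add: of_nat_diff algebra_simps)
  qed
  with lower upper show False
    by linarith
qed

lemma uncovered_level_iterate:
  assumes A: "A \<in> sets lebesgue" and \<eta>: "\<eta> * real (Suc k) \<le> 1 / 2"
    and k: "\<forall>m\<ge>n. Suc k < r m"
    and slices_uncovered: "\<forall>m\<ge>n. \<forall>q<height m.
          width (Suc m) \<le> uncovered A (left m q) (left m q + real (Suc k) * width (Suc m))"
    and q: "q < height n" and filled: "uncovered A (left n q) (left n q + width n) \<le> \<eta> * width n"
  shows "\<exists>q'<height (n + t). uncovered A (left (n + t) q') (left (n + t) q' + width (n + t))
           \<le> (\<eta> - (\<Sum>i<t. 1 / (2 * real (r (n + i))))) * width (n + t)"
proof (induction t)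
  case (Suc t)
  let ?\<eta> = "\<eta> - (\<Sum>i<t. 1 / (2 * real (r (n + i))))"
  obtain q' where q': "q' < height (n + t)"
    "uncovered A (left (n + t) q') (left (n + t) q' + width (n + t)) \<le> ?\<eta> * width (n + t)"
    using Suc.IH by blast
  have "0 \<le> (\<Sum>i<t. 1 / (2 * real (r (n + i)))) * real (Suc k)"
    by (simp add: sum_nonneg)
  then have "?\<eta> * real (Suc k) \<le> 1 / 2"
    using \<eta> by (simp add: left_diff_distrib)
  moreover have "Suc k < r (n + t)"
    using k by simp
  moreover have "width (Suc (n + t)) \<le> uncovered A (left (n + t) q') (left (n + t) q' + real (Suc k) * width (Suc (n + t)))"
    using slices_uncovered q'(1) by simp
  ultimately obtain q'' where "q'' < height (Suc (n + t))"
    "uncovered A (left (Suc (n + t)) q'') (left (Suc (n + t)) q'' + width (Suc (n + t)))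
       \<le> (?\<eta> - 1 / (2 * real (r (n + t)))) * width (Suc (n + t))"
    using uncovered_level_descent[OF A _ q'] by blast
  moreover have "?\<eta> - 1 / (2 * real (r (n + t))) = \<eta> - (\<Sum>i<Suc t. 1 / (2 * real (r (n + i))))"
    by simp
  ultimately show ?case
    by (metis add_Suc_right)
qed (use q filled in auto)

theorem multiply_recurrent:
  assumes eventually_spacer_free: "\<And>k. \<exists>N. \<forall>n\<ge>N. Suc k < r n \<and> (\<forall>i<k. s n i = 0)"
    and diverges: "\<not> summable (\<lambda>n. 1 / real (r n))"
    and A: "A \<in> sets lebesgue" "A \<subseteq> cs_space r s" "0 < emeasure lebesgue A"
  shows "\<exists>n>0. 0 < emeasure lebesgue (\<Inter>i\<in>{0..k}. (T ^^ (i * n)) ` A)"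
proof (rule ccontr)
  assume no_return: "\<not> ?thesis"
  obtain N where N: "\<forall>n\<ge>N. Suc k < r n \<and> (\<forall>i<k. s n i = 0)"
    using eventually_spacer_free by blast
  have slices_uncovered: "\<forall>m\<ge>N. \<forall>q<height m.
      width (Suc m) \<le> uncovered A (left m q) (left m q + real (Suc k) * width (Suc m))"
    using multiple_return_if_slices_filled[OF A(1)] N no_return height_pos by (meson Suc_lessD not_le)
  define \<eta> :: real where "\<eta> = 1 / (2 * real (Suc k))"
  have \<eta>: "0 < \<eta>" "\<eta> * real (Suc k) \<le> 1 / 2"
    by (simp_all add: \<eta>_def)
  obtain n q where n: "N \<le> n" "q < height n" "uncovered A (left n q) (left n q + width n) \<le> \<eta> * width n"
    using nearly_filled_level_exists[OF A \<eta>(1)] by blast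
  have "\<not> summable (\<lambda>i. 1 / (2 * real (r i)))"
    using diverges summable_cmult_iff[of "1 / 2" "\<lambda>i. 1 / real (r i)"] by simp
  then obtain t where t: "\<eta> < (\<Sum>i<t. 1 / (2 * real (r (n + i))))"
    using not_summable_shifted_sums_unbounded[of "\<lambda>i. 1 / (2 * real (r i))"] by auto
  obtain q' where "uncovered A (left (n + t) q') (left (n + t) q' + width (n + t))
      \<le> (\<eta> - (\<Sum>i<t. 1 / (2 * real (r (n + i))))) * width (n + t)"
  proof -
    have "\<forall>m\<ge>n. Suc k < r m" and "\<forall>m\<ge>n. \<forall>q<height m.
        width (Suc m) \<le> uncovered A (left m q) (left m q + real (Suc k) * width (Suc m))"
      using n(1) N slices_uncovered by auto
    from uncovered_level_iterate[OF A(1) \<eta>(2) this n(2,3), of t] that show thesis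
      by blast
  qed
  also have "\<dots> < 0"
    using t width_pos by (simp add: mult_neg_pos)
  finally show False
    using uncovered_nonneg not_less by blast
qed

end

section \<open>The case \<open>r\<^sub>n = n + 2\<close> with spacers prescribed by \<open>H\<^sub>n\<close>\<close>

definition sqrt_ceil :: "nat \<Rightarrow> nat" where
  "sqrt_ceil n = nat \<lceil>sqrt (real n)\<rceil>"

lemma sqrt_ceil_le: "sqrt_ceil n \<le> n"
proof -
  have "sqrt (real n) \<le> real n"
    using real_sqrt_le_mono[of "real n" "real n * real n"]
    by (cases "n = 0") (simp_all add: mult_le_cancel_left1)
  then show ?thesis
    by (simp add: sqrt_ceil_def)
qed

lemma le_sqrt_ceil:
  assumes "k * k \<le> n"
  shows "k \<le> sqrt_ceil n"
proof -
  have "(real k)\<^sup>2 \<le> real n"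
    using assms by (simp add: power2_eq_square flip: of_nat_mult)
  then have "real k \<le> sqrt (real n)"
    by (rule real_le_rsqrt)
  then show ?thesis
    by (simp add: sqrt_ceil_def) linarith
qed

definition Hlist :: "nat \<Rightarrow> nat list" where
  "Hlist n = map (\<lambda>j. j * 5 ^ (n * (n + 1) div 2)) [0..<Suc (sqrt_ceil n)]
        @ map (\<lambda>i. 5 ^ (n * (n + 1) div 2 + i)) [sqrt_ceil n..<Suc n]"

lemma set_Hlist: "set (Hlist n) = Hset n"
  unfolding Hlist_def Hset_def sqrt_ceil_def[symmetric] by (auto simp: image_iff less_Suc_eq_le)

lemma sorted_Hlist: "sorted_wrt (<) (Hlist n)"
proof -
  let ?m = "n * (n + 1) div 2"
  have "j * 5 ^ ?m < (5::nat) ^ (?m + i)" if "j \<le> sqrt_ceil n" "sqrt_ceil n \<le> i" for i j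
  proof -
    have "j < 5 ^ j"
      by (induction j) auto
    also have "(5::nat) ^ j \<le> 5 ^ i"
      using that by (intro power_increasing) auto
    finally show ?thesis
      by (simp add: power_add)
  qed
  moreover have "sorted_wrt (<) (map (\<lambda>j. j * 5 ^ ?m) [0..<Suc (sqrt_ceil n)])"
    unfolding sorted_wrt_map by (rule sorted_wrt_mono_rel[OF _ sorted_wrt_upt]) simp
  moreover have "sorted_wrt (<) (map (\<lambda>i. (5::nat) ^ (?m + i)) [sqrt_ceil n..<Suc n])"
    unfolding sorted_wrt_map by (rule sorted_wrt_mono_rel[OF _ sorted_wrt_upt]) (simp add: power_add)
  ultimately show ?thesis
    unfolding Hlist_def sorted_wrt_append by (auto simp del: upt_Suc simp: less_Suc_eq_le)
qed

lemma Hoff_small: "j \<le> sqrt_ceil n \<Longrightarrow> Hoff n j = j * hgt n"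
proof -
  have "sorted_list_of_set (Hset n) = Hlist n"
    using sorted_Hlist[of n] set_Hlist[of n]
    by (metis sorted_list_of_set.idem_if_sorted_distinct strict_sorted_iff)
  then show "j \<le> sqrt_ceil n \<Longrightarrow> Hoff n j = j * hgt n"
    unfolding Hoff_def Hlist_def hgt_def by (simp add: nth_append del: upt_Suc)
qed

lemma spacer_eq_0: "i < sqrt_ceil n \<Longrightarrow> spacer n i = 0"
  using sqrt_ceil_le[of n] Hoff_small[of "Suc i" n] Hoff_small[of i n]
  by (simp add: spacer_def rr_def algebra_simps)

lemma rr_spacer_eventually_spacer_free: "\<exists>N. \<forall>n\<ge>N. Suc k < rr n \<and> (\<forall>i<k. spacer n i = 0)"
proof (intro exI allI impI)
  fix n assume "k * k \<le> n"
  then have "k \<le> sqrt_ceil n"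
    by (rule le_sqrt_ceil)
  then show "Suc k < rr n \<and> (\<forall>i<k. spacer n i = 0)"
    using sqrt_ceil_le[of n] spacer_eq_0[of _ n] by (simp add: rr_def)
qed

lemma rr_not_summable: "\<not> summable (\<lambda>n. 1 / real (rr n))"
  using not_summable_harmonic[where 'a = real] summable_iff_shift[of "\<lambda>n. inverse (real n)" 2]
  by (simp add: rr_def inverse_eq_divide)

theorem mainTheorem15:
  fixes A :: "real set" and k :: nat
  assumes "A \<in> sets lebesgue"
    and "A \<subseteq> cs_space rr spacer"
    and "emeasure lebesgue A > 0"
  shows "\<exists>n>0. emeasure lebesgue
           (\<Inter>i\<in>{0..k}. (cs_map rr spacer ^^ (i * n)) ` A) > 0"
proof -
  interpret rank_one rr spacer
    by unfold_locales (simp add: rr_def)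
  show ?thesis
    using multiply_recurrent[OF rr_spacer_eventually_spacer_free rr_not_summable assms] .
qed

end
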